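(* Let $G$ be a graph with $m\ge1$ edges, let $k\ge1$ and $0\le p\le m$ be integers, $\ell=m-p$, and $\eta=k(\ell+2)$. Let $E$ be the classification instance $E(G,\eta)$ described in the context. Then $G$ has a set $U\subseteq V(G)$ with $|U|\le k$ that is incident to at least $p$ edges if and only if there is a decision tree $T$ with $|T|\le k$ and $|O(T,E)|\le \ell\eta$.
   Context: Fix an ordering $e_1,\dots,e_m$ of $E(G)$. For a positive integer $\eta$, $E(G,\eta)$ has features $V(G)\cup\{d_0\}$ (one "vertex feature" per vertex, plus $d_0$) and, for each $r\in[\eta]$ and $i\in[m]$: a negative example with $d_0=2m(r-1)+2i-1$ and, for each $v\in V(G)$, value $1$ if $v$ is an endpoint of $e_i$ and $0$ otherwise; and a positive example with $d_0=2m(r-1)+2i$ and value $0$ on every vertex feature. A decision tree (DT) is a rooted tree whose test nodes $v$ carry a feature $f(v)$ and integer threshold $\lambda(v)$ (examples with $e(f(v))\le\lambda(v)$ go left, others right) and whose leaves are labeled positive or negative. $|T|$ is the number of test nodes. An example is an outlier for $T$ if it reaches a leaf with the opposite label; $O(T,E)$ is the set of outliers. *)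

theory Defs
  imports Main
begin

(* Features: None is d_0, Some v is the vertex feature of v. *)
type_synonym 'v feature = "'v option"
type_synonym 'v example = "('v feature \<Rightarrow> int) \<times> bool"  (* values, label (True = positive) *)

datatype 'f dtree = Leaf bool | Node 'f int "'f dtree" "'f dtree"

fun dt_size :: "'f dtree \<Rightarrow> nat" where
  "dt_size (Leaf b) = 0"
| "dt_size (Node f t l r) = Suc (dt_size l + dt_size r)"

fun dt_features :: "'f dtree \<Rightarrow> 'f set" where
  "dt_features (Leaf b) = {}"
| "dt_features (Node f t l r) = insert f (dt_features l \<union> dt_features r)"

fun dt_classify :: "'f dtree \<Rightarrow> ('f \<Rightarrow> int) \<Rightarrow> bool" where
  "dt_classify (Leaf b) e = b"
| "dt_classify (Node f t l r) e = (if e f \<le> t then dt_classify l e else dt_classify r e)"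

definition outliers :: "'f dtree \<Rightarrow> (('f \<Rightarrow> int) \<times> bool) set \<Rightarrow> (('f \<Rightarrow> int) \<times> bool) set" where
  "outliers T E = {x \<in> E. dt_classify T (fst x) \<noteq> snd x}"

definition features :: "'v set \<Rightarrow> 'v feature set" where
  "features V = insert None (Some ` V)"

(* the instance E(G,eta); edges e_1..e_m are es!0 .. es!(m-1) *)
definition neg_ex :: "'v set list \<Rightarrow> nat \<Rightarrow> nat \<Rightarrow> 'v example" where
  "neg_ex es r i = ((\<lambda>f. case f of
        None \<Rightarrow> int (2 * length es * (r - 1) + 2 * i - 1)
      | Some v \<Rightarrow> (if v \<in> es ! (i - 1) then 1 else 0)), False)"

definition pos_ex :: "'v set list \<Rightarrow> nat \<Rightarrow> nat \<Rightarrow> 'v example" where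
  "pos_ex es r i = ((\<lambda>f. case f of
        None \<Rightarrow> int (2 * length es * (r - 1) + 2 * i)
      | Some v \<Rightarrow> 0), True)"

definition instance_E :: "'v set list \<Rightarrow> nat \<Rightarrow> 'v example set" where
  "instance_E es \<eta> =
     {neg_ex es r i | r i. r \<in> {1..\<eta>} \<and> i \<in> {1..length es}}
   \<union> {pos_ex es r i | r i. r \<in> {1..\<eta>} \<and> i \<in> {1..length es}}"

end

theory Submission
  imports Defs
begin

text \<open>
  If \<open>U\<close> covers at least \<open>p\<close> edges, the tree that tests the vertices of \<open>U\<close> one after
  the other and sends an example to a negative leaf as soon as one of them has value \<open>1\<close>
  misclassifies only the \<open>\<eta>\<close> copies of the negative example of each of the at most \<open>\<ell>\<close>
  uncovered edges.
  Conversely, let \<open>U\<close> be the set of vertices tested by a tree \<open>T\<close> with \<open>|T| \<le> k\<close>. For an edge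
  missed by \<open>U\<close>, the negative and the positive example of each round differ only in \<open>d\<^sub>0\<close>,
  where they take consecutive values; so \<open>T\<close> classifies them alike unless it has a \<open>d\<^sub>0\<close>-test
  with threshold exactly between them, and this happens for at most \<open>k\<close> of these pairs. Each
  remaining pair contains an outlier, so \<open>\<ell> + 1\<close> missed edges would give at least
  \<open>(\<ell> + 1)\<eta> - k > \<ell>\<eta>\<close> outliers.
\<close>

fun dt_tests :: "'f dtree \<Rightarrow> ('f \<times> int) set" where
  "dt_tests (Leaf b) = {}"
| "dt_tests (Node f t l r) = insert (f, t) (dt_tests l \<union> dt_tests r)"

lemma finite_dt_tests: "finite (dt_tests T)"
  by (induction T) auto

lemma card_dt_tests_le: "card (dt_tests T) \<le> dt_size T"
proof (induction T)
  case (Node f t l r)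
  have "card (dt_tests (Node f t l r)) \<le> Suc (card (dt_tests l \<union> dt_tests r))"
    by (simp add: card_insert_le_m1 card_insert_if)
  also have "\<dots> \<le> Suc (card (dt_tests l) + card (dt_tests r))"
    by (simp add: card_Un_le)
  finally show ?case
    using Node.IH by simp
qed simp

lemma dt_features_eq_fst_dt_tests: "dt_features T = fst ` dt_tests T"
  by (induction T) auto

lemma card_dt_features_le: "card (dt_features T) \<le> dt_size T"
  unfolding dt_features_eq_fst_dt_tests
  using card_image_le[OF finite_dt_tests] card_dt_tests_le le_trans by blast

lemma finite_dt_thresholds: "finite {t. (f, t) \<in> dt_tests T}"
  using finite_vimageI[OF finite_dt_tests, of "Pair f" T] by (simp add: vimage_def inj_on_def)

lemma card_dt_thresholds_le: "card {t. (f, t) \<in> dt_tests T} \<le> dt_size T"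
proof -
  have "card {t. (f, t) \<in> dt_tests T} = card (Pair f ` {t. (f, t) \<in> dt_tests T})"
    by (simp add: card_image inj_on_def)
  also have "\<dots> \<le> card (dt_tests T)"
    by (rule card_mono[OF finite_dt_tests]) auto
  finally show ?thesis
    using card_dt_tests_le le_trans by blast
qed

lemma dt_classify_cong:
  assumes "\<And>f t. (f, t) \<in> dt_tests T \<Longrightarrow> (x f \<le> t) = (y f \<le> t)"
  shows "dt_classify T x = dt_classify T y"
  using assms by (induction T) auto

lemma card_unseparated_pairs_le_card_outliers:
  fixes a b :: "'j \<Rightarrow> ('f \<Rightarrow> int) \<times> bool"
  assumes "finite E" and "inj_on a P" and "inj_on b P" and "a ` P \<subseteq> E" and "b ` P \<subseteq> E"
    and "\<And>j. j \<in> P \<Longrightarrow> \<not> snd (a j) \<and> snd (b j)"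
    and "\<And>j. j \<in> P \<Longrightarrow> dt_classify T (fst (a j)) = dt_classify T (fst (b j))"
  shows "card P \<le> card (outliers T E)"
proof (rule card_inj_on_le)
  define g where "g j = (if a j \<in> outliers T E then a j else b j)" for j
  show "g ` P \<subseteq> outliers T E"
    using assms(4-7) by (force simp: g_def outliers_def)
  show "inj_on g P"
  proof (rule inj_onI)
    fix i j assume "i \<in> P" "j \<in> P" "g i = g j"
    then show "i = j"
      using assms(2,3) assms(6)[of i] assms(6)[of j] unfolding g_def inj_on_def
      by (auto split: if_splits)
  qed
  show "finite (outliers T E)"
    using assms(1) by (simp add: outliers_def)
qed

lemma mult_add_eq_mult_add_iff:
  fixes m a b i j :: nat
  assumes "1 \<le> i" "i \<le> m" "1 \<le> j" "j \<le> m"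
  shows "m * a + i = m * b + j \<longleftrightarrow> a = b \<and> i = j"
proof -
  have "m * a + i \<noteq> m * b + j" if "a < b" "1 \<le> j" "i \<le> m" for a b i j
  proof -
    have "m * Suc a \<le> m * b"
      using that by (intro mult_le_mono2) simp
    then show ?thesis
      using that by simp
  qed
  then show ?thesis
    using assms by (metis linorder_neqE_nat add_left_cancel)
qed

lemma card_le_card_avoiding_add_card:
  assumes "finite A" and "finite S" and "inj_on d A"
  shows "card A \<le> card {j \<in> A. d j \<notin> S} + card S"
proof -
  have "card {j \<in> A. d j \<in> S} \<le> card S"
    using assms by (intro card_inj_on_le[of d]) (auto intro: inj_on_subset)
  moreover have "card A = card {j \<in> A. d j \<notin> S} + card {j \<in> A. d j \<in> S}"
    using assms(1) by (subst card_Un_disjoint[symmetric]) (auto intro: arg_cong[where f = card])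
  ultimately show ?thesis
    by linarith
qed

definition uncovered :: "'v set list \<Rightarrow> 'v set \<Rightarrow> nat set" where
  "uncovered es U = {i \<in> {1..length es}. es ! (i - 1) \<inter> U = {}}"

lemma finite_uncovered: "finite (uncovered es U)"
  by (simp add: uncovered_def)

lemma card_uncovered:
  assumes "distinct es"
  shows "card (uncovered es U) + card {e \<in> set es. e \<inter> U \<noteq> {}} = length es"
proof -
  have "uncovered es U = Suc ` {i. i < length es \<and> es ! i \<inter> U = {}}"
  proof (rule set_eqI)
    fix i show "i \<in> uncovered es U \<longleftrightarrow> i \<in> Suc ` {i. i < length es \<and> es ! i \<inter> U = {}}"
      by (cases i) (auto simp: uncovered_def)
  qed
  then have "card (uncovered es U) = length (filter (\<lambda>e. e \<inter> U = {}) es)"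
    by (simp add: card_image length_filter_conv_card)
  also have "\<dots> = card {e \<in> set es. e \<inter> U = {}}"
    using assms by (simp add: distinct_length_filter Int_commute Collect_conj_eq)
  finally have "card (uncovered es U) = card {e \<in> set es. e \<inter> U = {}}" .
  moreover have "card {e \<in> set es. e \<inter> U = {}} + card {e \<in> set es. e \<inter> U \<noteq> {}} = card (set es)"
    by (subst card_Un_disjoint[symmetric]) (auto intro: arg_cong[where f = card])
  ultimately show ?thesis
    using assms by (simp add: distinct_card)
qed

lemma neg_ex_vertex [simp]: "fst (neg_ex es r i) (Some v) = (if v \<in> es ! (i - 1) then 1 else 0)"
  by (simp add: neg_ex_def)

lemma pos_ex_vertex [simp]: "fst (pos_ex es r i) (Some v) = 0"
  by (simp add: pos_ex_def)

lemma snd_neg_ex [simp]: "snd (neg_ex es r i) = False"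
  by (simp add: neg_ex_def)

lemma snd_pos_ex [simp]: "snd (pos_ex es r i) = True"
  by (simp add: pos_ex_def)

lemma pos_ex_d0: "fst (pos_ex es r i) None = int (2 * (length es * (r - 1) + i))"
  by (simp add: pos_ex_def algebra_simps)

lemma neg_ex_d0: "i \<ge> 1 \<Longrightarrow> fst (neg_ex es r i) None = fst (pos_ex es r i) None - 1"
  by (simp add: neg_ex_def pos_ex_def of_nat_diff)

lemma pos_ex_d0_eq_iff:
  assumes "1 \<le> r" "1 \<le> r'" "1 \<le> i" "i \<le> length es" "1 \<le> i'" "i' \<le> length es"
  shows "fst (pos_ex es r i) None = fst (pos_ex es r' i') None \<longleftrightarrow> r = r' \<and> i = i'"
proof -
  have "fst (pos_ex es r i) None = fst (pos_ex es r' i') None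
      \<longleftrightarrow> length es * (r - 1) + i = length es * (r' - 1) + i'"
    by (simp only: pos_ex_d0 of_nat_eq_iff) (rule mult_left_cancel, simp)
  also have "\<dots> \<longleftrightarrow> r = r' \<and> i = i'"
    using assms by (simp add: mult_add_eq_mult_add_iff) arith
  finally show ?thesis .
qed

lemma inj_on_neg_ex_d0:
  "inj_on (\<lambda>(r, i). fst (neg_ex es r i) None) ({1..} \<times> {1..length es})"
  by (auto intro!: inj_onI simp: neg_ex_d0 pos_ex_d0_eq_iff)

lemma inj_on_neg_ex: "inj_on (\<lambda>(r, i). neg_ex es r i) ({1..} \<times> {1..length es})"
  by (auto intro!: inj_onI dest: arg_cong[where f = "\<lambda>x. fst x None"]
      simp: neg_ex_d0 pos_ex_d0_eq_iff)

lemma inj_on_pos_ex: "inj_on (\<lambda>(r, i). pos_ex es r i) ({1..} \<times> {1..length es})"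
  by (auto intro!: inj_onI dest: arg_cong[where f = "\<lambda>x. fst x None"] simp: pos_ex_d0_eq_iff)

lemma neg_ex_in_instance_E: "r \<in> {1..\<eta>} \<Longrightarrow> i \<in> {1..length es} \<Longrightarrow> neg_ex es r i \<in> instance_E es \<eta>"
  unfolding instance_E_def by blast

lemma pos_ex_in_instance_E: "r \<in> {1..\<eta>} \<Longrightarrow> i \<in> {1..length es} \<Longrightarrow> pos_ex es r i \<in> instance_E es \<eta>"
  unfolding instance_E_def by blast

lemma finite_instance_E: "finite (instance_E es \<eta>)"
proof -
  have "instance_E es \<eta> = (\<lambda>(r, i). neg_ex es r i) ` ({1..\<eta>} \<times> {1..length es})
      \<union> (\<lambda>(r, i). pos_ex es r i) ` ({1..\<eta>} \<times> {1..length es})"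
    unfolding instance_E_def by force
  then show ?thesis
    by simp
qed

fun vertex_test_tree :: "'v list \<Rightarrow> 'v feature dtree" where
  "vertex_test_tree [] = Leaf True"
| "vertex_test_tree (u # us) = Node (Some u) 0 (vertex_test_tree us) (Leaf False)"

lemma dt_size_vertex_test_tree: "dt_size (vertex_test_tree us) = length us"
  by (induction us) auto

lemma dt_features_vertex_test_tree: "dt_features (vertex_test_tree us) = Some ` set us"
  by (induction us) auto

lemma dt_classify_vertex_test_tree:
  "dt_classify (vertex_test_tree us) x = (\<forall>u\<in>set us. x (Some u) \<le> 0)"
  by (induction us) auto

lemma card_outliers_vertex_test_tree_le:
  "card (outliers (vertex_test_tree us) (instance_E es \<eta>)) \<le> \<eta> * card (uncovered es (set us))"
proof -
  let ?T = "vertex_test_tree us"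
  have "outliers ?T (instance_E es \<eta>)
      \<subseteq> (\<lambda>(r, i). neg_ex es r i) ` ({1..\<eta>} \<times> uncovered es (set us))"
  proof
    fix x assume x: "x \<in> outliers ?T (instance_E es \<eta>)"
    then obtain r i where ri: "r \<in> {1..\<eta>}" "i \<in> {1..length es}"
      and "x = neg_ex es r i \<or> x = pos_ex es r i"
      by (auto simp: outliers_def instance_E_def)
    moreover have "dt_classify ?T (fst x) \<noteq> snd x"
      using x by (simp add: outliers_def)
    ultimately have "x = neg_ex es r i" and "es ! (i - 1) \<inter> set us = {}"
      by (auto simp: dt_classify_vertex_test_tree split: if_splits)
    then show "x \<in> (\<lambda>(r, i). neg_ex es r i) ` ({1..\<eta>} \<times> uncovered es (set us))"
      using ri by (auto simp: uncovered_def)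
  qed
  then have "card (outliers ?T (instance_E es \<eta>)) \<le> card ({1..\<eta>} \<times> uncovered es (set us))"
    by (meson card_image_le card_mono finite_SigmaI finite_atLeastAtMost finite_imageI
        finite_uncovered order_trans)
  then show ?thesis
    by (simp add: card_cartesian_product)
qed

lemma dt_classify_neg_ex_eq_pos_ex:
  assumes "es ! (i - 1) \<inter> {v. Some v \<in> dt_features T} = {}" and "i \<ge> 1"
    and "(None, fst (neg_ex es r i) None) \<notin> dt_tests T"
  shows "dt_classify T (fst (neg_ex es r i)) = dt_classify T (fst (pos_ex es r i))"
proof (rule dt_classify_cong)
  fix f t assume test: "(f, t) \<in> dt_tests T"
  show "(fst (neg_ex es r i) f \<le> t) = (fst (pos_ex es r i) f \<le> t)"
  proof (cases f)
    case None
    then have "t \<noteq> fst (pos_ex es r i) None - 1"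
      using test assms(2,3) by (auto simp: neg_ex_d0)
    then show ?thesis
      using None assms(2) by (auto simp: neg_ex_d0)
  next
    case (Some v)
    then have "v \<notin> es ! (i - 1)"
      using test assms(1) by (force simp: dt_features_eq_fst_dt_tests)
    then show ?thesis
      using Some by simp
  qed
qed

lemma card_outliers_lower_bound:
  "\<eta> * card (uncovered es {v. Some v \<in> dt_features T})
     \<le> card (outliers T (instance_E es \<eta>)) + dt_size T"
proof -
  define A where "A = {1..\<eta>} \<times> uncovered es {v. Some v \<in> dt_features T}"
  define d where "d = (\<lambda>(r, i). fst (neg_ex es r i) None)"
  define P where "P = {j \<in> A. d j \<notin> {t. (None, t) \<in> dt_tests T}}"
  have "A \<subseteq> {1..} \<times> {1..length es}"
    by (auto simp: A_def uncovered_def)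
  have "card A \<le> card P + dt_size T"
  proof -
    have "card A \<le> card P + card {t. (None, t) \<in> dt_tests T}"
      unfolding P_def d_def
      by (intro card_le_card_avoiding_add_card finite_dt_thresholds
          inj_on_subset[OF inj_on_neg_ex_d0 \<open>A \<subseteq> _\<close>])
        (simp add: A_def finite_uncovered)
    then show ?thesis
      using card_dt_thresholds_le[of None T] by linarith
  qed
  moreover have "card P \<le> card (outliers T (instance_E es \<eta>))"
  proof (rule card_unseparated_pairs_le_card_outliers)
    have "P \<subseteq> {1..} \<times> {1..length es}"
      using \<open>A \<subseteq> _\<close> by (auto simp: P_def)
    then show "inj_on (\<lambda>(r, i). neg_ex es r i) P" "inj_on (\<lambda>(r, i). pos_ex es r i) P"
      using inj_on_neg_ex inj_on_pos_ex inj_on_subset by blast+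
    show "(\<lambda>(r, i). neg_ex es r i) ` P \<subseteq> instance_E es \<eta>"
      "(\<lambda>(r, i). pos_ex es r i) ` P \<subseteq> instance_E es \<eta>"
      by (auto simp: P_def A_def uncovered_def neg_ex_in_instance_E pos_ex_in_instance_E)
    show "dt_classify T (fst ((\<lambda>(r, i). neg_ex es r i) j))
        = dt_classify T (fst ((\<lambda>(r, i). pos_ex es r i) j))" if "j \<in> P" for j
      using that by (cases j) (simp add: P_def A_def d_def uncovered_def dt_classify_neg_ex_eq_pos_ex)
  qed (auto simp: finite_instance_E)
  ultimately show ?thesis
    by (simp add: A_def card_cartesian_product)
qed

lemma card_tested_vertices_le: "card {v. Some v \<in> dt_features T} \<le> dt_size T"
proof -
  have "card {v. Some v \<in> dt_features T} = card (Some ` {v. Some v \<in> dt_features T})"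
    by (simp add: card_image)
  also have "\<dots> \<le> card (dt_features T)"
    by (rule card_mono) (auto simp: dt_features_eq_fst_dt_tests finite_dt_tests)
  finally show ?thesis
    using card_dt_features_le[of T] by linarith
qed

lemma small_tree_if_partial_cover:
  assumes "finite V" and "distinct es" and "U \<subseteq> V" and "card U \<le> k"
    and "p \<le> card {e \<in> set es. e \<inter> U \<noteq> {}}"
  shows "\<exists>T. dt_features T \<subseteq> features V \<and> dt_size T \<le> k \<and>
    card (outliers T (instance_E es \<eta>)) \<le> (length es - p) * \<eta>"
proof -
  obtain us where us: "set us = U" "distinct us"
    using finite_distinct_list finite_subset[OF assms(3,1)] by blast
  have "card (outliers (vertex_test_tree us) (instance_E es \<eta>)) \<le> \<eta> * card (uncovered es U)"
    using card_outliers_vertex_test_tree_le us(1) by blast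
  also have "\<dots> \<le> \<eta> * (length es - p)"
    using card_uncovered[OF assms(2), of U] assms(5) by (intro mult_le_mono2) linarith
  finally show ?thesis
    using us assms(3,4)
    by (intro exI[of _ "vertex_test_tree us"])
      (auto simp: dt_features_vertex_test_tree dt_size_vertex_test_tree features_def
        distinct_card mult.commute)
qed

lemma partial_cover_if_small_tree:
  assumes "distinct es" and "p \<le> length es" and "k < \<eta>"
    and "dt_features T \<subseteq> features V" and "dt_size T \<le> k"
    and "card (outliers T (instance_E es \<eta>)) \<le> (length es - p) * \<eta>"
  shows "\<exists>U. U \<subseteq> V \<and> card U \<le> k \<and> p \<le> card {e \<in> set es. e \<inter> U \<noteq> {}}"
proof (intro exI conjI)
  let ?U = "{v. Some v \<in> dt_features T}"
  show "?U \<subseteq> V"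
    using assms(4) by (auto simp: features_def)
  show "card ?U \<le> k"
    using card_tested_vertices_le[of T] assms(5) by linarith
  show "p \<le> card {e \<in> set es. e \<inter> ?U \<noteq> {}}"
  proof (rule ccontr)
    assume "\<not> ?thesis"
    then have "length es - p + 1 \<le> card (uncovered es ?U)"
      using card_uncovered[OF assms(1), of ?U] assms(2) by linarith
    then have "\<eta> * (length es - p + 1) \<le> card (outliers T (instance_E es \<eta>)) + dt_size T"
      using card_outliers_lower_bound[of \<eta> es T] by (meson mult_le_mono2 order_trans)
    then show False
      using assms(3,5,6) by (simp add: algebra_simps)
  qed
qed

theorem lemma4:
  fixes V :: "'v set" and es :: "'v set list" and k p :: nat
  assumes "finite V"
    and "distinct es"
    and "\<forall>e\<in>set es. e \<subseteq> V \<and> card e = 2"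
    and "length es \<ge> 1"
    and "k \<ge> 1"
    and "p \<le> length es"
  shows "(\<exists>U. U \<subseteq> V \<and> card U \<le> k \<and> card {e \<in> set es. e \<inter> U \<noteq> {}} \<ge> p)
     \<longleftrightarrow> (\<exists>T :: 'v feature dtree. dt_features T \<subseteq> features V \<and> dt_size T \<le> k \<and>
            card (outliers T (instance_E es (k * (length es - p + 2))))
              \<le> (length es - p) * (k * (length es - p + 2)))"
proof -
  have "k < k * (length es - p + 2)"
    using assms(5) by simp
  then show ?thesis
    by (intro iffI; elim exE conjE)
      (blast intro: small_tree_if_partial_cover[OF assms(1,2)],
       blast intro: partial_cover_if_small_tree[OF assms(2,6)])
qed

end
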